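(* Let $u_{\varepsilon,\ell}$ be a 3iet word with parameters $\varepsilon,\ell$, and let the continued fraction $\varepsilon=[0,a_1,a_2,a_3,\dots]$ have bounded partial quotients. Then $$ {\rm ind}(u_{\varepsilon,\ell})\geq \sup_{n\in\mathbb N} \Big\lfloor \frac{a_n}{2}\Big\rfloor\,. $$
   Context: Parameters $\varepsilon,\ell$ satisfy $\varepsilon\in(0,1)\setminus\mathbb Q$ and $\max\{\varepsilon,1-\varepsilon\}<\ell<1$. The three interval exchange $T_{\varepsilon,\ell}:[0,\ell)\to[0,\ell)$ is defined by $T_{\varepsilon,\ell}(x)=x+1-\varepsilon$ for $x\in I_A:=[0,\ell-1+\varepsilon)$, $T_{\varepsilon,\ell}(x)=x+1-2\varepsilon$ for $x\in I_B:=[\ell-1+\varepsilon,\varepsilon)$, and $T_{\varepsilon,\ell}(x)=x-\varepsilon$ for $x\in I_C:=[\varepsilon,\ell)$. A 3iet word with parameters $\varepsilon,\ell$ is the word $u=(u_n)_{n\in\mathbb N}$ over $\{A,B,C\}$ with $u_n=X$ iff $T_{\varepsilon,\ell}^n(x_0)\in I_X$, for some $x_0\in[0,\ell)$; its language and index do not depend on $x_0$. A word $v$ is a power $w^r$ ($r=|v|/|w|$) if $|v|\ge|w|$ and $v$ is a prefix of $www\cdots$; ${\rm ind}(w)=\sup\{r\in\mathbb Q: w^r \text{ is a factor of } u\}$ and ${\rm ind}(u)=\sup\{{\rm ind}(w): w \text{ a factor of } u\}$. *)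

theory Defs
  imports Complex_Main "HOL-Library.Extended_Real"
begin

datatype letter = A | B | C

definition T3 :: "real \<Rightarrow> real \<Rightarrow> real \<Rightarrow> real" where
  "T3 eps l x =
     (if x < l - 1 + eps then x + 1 - eps
      else if x < eps then x + 1 - 2 * eps
      else x - eps)"

definition code3 :: "real \<Rightarrow> real \<Rightarrow> real \<Rightarrow> letter" where
  "code3 eps l x =
     (if x < l - 1 + eps then A else if x < eps then B else C)"

definition iet3_word :: "real \<Rightarrow> real \<Rightarrow> real \<Rightarrow> nat \<Rightarrow> letter" where
  "iet3_word eps l x0 n = code3 eps l ((T3 eps l ^^ n) x0)"

definition is_factor :: "'a list \<Rightarrow> (nat \<Rightarrow> 'a) \<Rightarrow> bool" where
  "is_factor v u \<longleftrightarrow> (\<exists>i. v = map (\<lambda>k. u (i + k)) [0..<length v])"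

definition is_power_of :: "'a list \<Rightarrow> 'a list \<Rightarrow> bool" where
  "is_power_of v w \<longleftrightarrow> length w \<le> length v \<and>
     (\<forall>k < length v. v ! k = w ! (k mod length w))"

definition word_ind :: "(nat \<Rightarrow> 'a) \<Rightarrow> 'a list \<Rightarrow> ereal" where
  "word_ind u w = Sup {ereal (real (length v) / real (length w)) | v.
                         is_factor v u \<and> is_power_of v w}"

definition seq_ind :: "(nat \<Rightarrow> 'a) \<Rightarrow> ereal" where
  "seq_ind u = (SUP w \<in> {w. w \<noteq> [] \<and> is_factor w u}. word_ind u w)"

text \<open>Continued fraction expansion x = [a0; a1, a2, ...] via complete quotients.\<close>
fun cf_rest :: "real \<Rightarrow> nat \<Rightarrow> real" where
  "cf_rest x 0 = x"
| "cf_rest x (Suc n) = 1 / frac (cf_rest x n)"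

definition cf_pq :: "real \<Rightarrow> nat \<Rightarrow> int" where
  "cf_pq x n = \<lfloor>cf_rest x n\<rfloor>"

end

theory Submission
  imports Defs "HOL-Analysis.Analysis"
begin

text \<open>The 3iet \<open>T3 eps l\<close> is the map induced on \<open>[0, l)\<close> by the rotation \<open>x \<mapsto> x - eps\<close> of the
  circle \<open>[0, 1)\<close>, and its coding is determined by the cells of the rotation with respect to the cut
  points \<open>0, l - 1 + eps, eps, l\<close>. Let \<open>q\<close> be the denominator of the \<open>(n-1)\<close>-st convergent of
  \<open>eps\<close>, so that \<open>q * eps = p \<plusminus> \<delta>\<close> with \<open>a\<^sub>n * q * \<delta> < 1\<close>. Then \<open>q\<close> steps of the rotation move
  a point by \<open>\<delta>\<close>, so an orbit segment of length \<open>(K - 1) * q\<close> that stays at distance more than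
  \<open>\<delta>\<close> (on the relevant side) from the cut points has \<open>q\<close>-periodic cells. For \<open>2 * K \<le> a\<^sub>n\<close> the
  bad starting points form a set of measure less than \<open>1\<close>, the good ones an open set, and the
  rotation orbit of \<open>x0\<close> is dense; so a good point occurs on it, and inducing on \<open>[0, l)\<close> turns
  its periodic segment into a \<open>K\<close>-th power in the 3iet word.\<close>

fun cf_denom :: "real \<Rightarrow> nat \<Rightarrow> int" where
  "cf_denom e 0 = 0"
| "cf_denom e (Suc 0) = 1"
| "cf_denom e (Suc (Suc j)) = cf_pq e (Suc j) * cf_denom e (Suc j) + cf_denom e j"

fun cf_numer :: "real \<Rightarrow> nat \<Rightarrow> int" where
  "cf_numer e 0 = 1"
| "cf_numer e (Suc 0) = 0"
| "cf_numer e (Suc (Suc j)) = cf_pq e (Suc j) * cf_numer e (Suc j) + cf_numer e j"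

text \<open>\<open>cf_gap e j\<close> is \<open>\<bar>cf_denom e j * e - cf_numer e j\<bar>\<close> (see \<open>cf_denom_mult_sub_numer\<close>).\<close>
fun cf_gap :: "real \<Rightarrow> nat \<Rightarrow> real" where
  "cf_gap e 0 = 1"
| "cf_gap e (Suc 0) = e"
| "cf_gap e (Suc (Suc j)) = cf_gap e j - cf_pq e (Suc j) * cf_gap e (Suc j)"

lemma cf_rest_notin_Rats:
  assumes "e \<notin> \<rat>" shows "cf_rest e j \<notin> \<rat>"
proof (induction j)
  case 0 then show ?case using assms by simp
next
  case (Suc j)
  have "frac (cf_rest e j) \<notin> \<rat>"
  proof
    assume "frac (cf_rest e j) \<in> \<rat>"
    then have "frac (cf_rest e j) + of_int \<lfloor>cf_rest e j\<rfloor> \<in> \<rat>" by simp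
    then show False using Suc by (simp add: frac_def)
  qed
  then show ?case by (simp add: Rats_inverse_iff divide_inverse)
qed

context
  fixes e :: real
  assumes e_gt_0: "0 < e" and e_lt_1: "e < 1" and e_irrational: "e \<notin> \<rat>"
begin

lemma frac_cf_rest_gt_0: "0 < frac (cf_rest e j)"
  using cf_rest_notin_Rats[OF e_irrational] Ints_subset_Rats by auto

lemma cf_pq_Suc_ge_1: "1 \<le> cf_pq e (Suc j)"
proof -
  have "1 < 1 / frac (cf_rest e j)" using frac_cf_rest_gt_0 frac_lt_1 by simp
  then show ?thesis by (simp add: cf_pq_def le_floor_iff)
qed

lemma frac_cf_rest_Suc: "frac (cf_rest e (Suc j)) = 1 / frac (cf_rest e j) - cf_pq e (Suc j)"
  by (simp add: cf_pq_def frac_def)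

lemma cf_gap_Suc: "cf_gap e (Suc j) = cf_gap e j * frac (cf_rest e j)"
proof (induction j)
  case 0 then show ?case using e_gt_0 e_lt_1 by (simp add: frac_eq)
next
  case (Suc j)
  have "frac (cf_rest e j) \<noteq> 0" using frac_cf_rest_gt_0[of j] by simp
  then show ?case
    using Suc by (simp add: frac_cf_rest_Suc algebra_simps del: cf_rest.simps)
qed

lemma cf_gap_pos: "0 < cf_gap e j"
proof (induction j)
  case (Suc j)
  show ?case unfolding cf_gap_Suc by (rule mult_pos_pos[OF Suc frac_cf_rest_gt_0])
qed simp

lemma cf_denom_bounds: "0 \<le> cf_denom e j \<and> 1 \<le> cf_denom e (Suc j)"
proof (induction j)
  case 0 then show ?case by simp
next
  case (Suc j)
  have "1 * 1 \<le> cf_pq e (Suc j) * cf_denom e (Suc j)"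
    using cf_pq_Suc_ge_1[of j] Suc by (intro mult_mono) auto
  then show ?case using Suc by simp
qed

lemma cf_denom_gap_det:
  "real_of_int (cf_denom e (Suc j)) * cf_gap e j + cf_denom e j * cf_gap e (Suc j) = 1"
  by (induction j) (simp_all add: algebra_simps)

lemma cf_denom_mult_sub_numer:
  "real_of_int (cf_denom e j) * e - cf_numer e j = (-1) ^ (j + 1) * cf_gap e j"
proof -
  have "real_of_int (cf_denom e j) * e - cf_numer e j = (-1) ^ (j + 1) * cf_gap e j \<and>
    real_of_int (cf_denom e (Suc j)) * e - cf_numer e (Suc j) = (-1) ^ (Suc j + 1) * cf_gap e (Suc j)"
  proof (induction j)
    case (Suc j)
    define a where "a = real_of_int (cf_pq e (Suc j))"
    have "real_of_int (cf_denom e (Suc (Suc j))) * e - cf_numer e (Suc (Suc j)) =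
      a * (real_of_int (cf_denom e (Suc j)) * e - cf_numer e (Suc j)) + (cf_denom e j * e - cf_numer e j)"
      by (simp add: a_def algebra_simps)
    also have "\<dots> = a * ((-1) ^ (Suc j + 1) * cf_gap e (Suc j)) + (-1) ^ (j + 1) * cf_gap e j"
      using Suc by simp
    also have "\<dots> = (-1) ^ (Suc (Suc j) + 1) * cf_gap e (Suc (Suc j))"
      by (simp add: a_def algebra_simps)
    finally show ?case using Suc by simp
  qed simp
  then show ?thesis ..
qed

lemma cf_approximation:
  assumes "1 \<le> n"
  obtains q :: nat and p \<sigma> :: int and \<delta> :: real
  where "1 \<le> q" "\<sigma> = 1 \<or> \<sigma> = -1" "0 < \<delta>" "real q * e = p + \<sigma> * \<delta>"
    "cf_pq e n * real q * \<delta> < 1"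
proof -
  obtain j where n: "n = Suc j" using assms by (cases n) auto
  define q where "q = nat (cf_denom e (Suc j))"
  define \<sigma> :: int where "\<sigma> = (-1) ^ (j + 2)"
  have q: "1 \<le> q" "real q = cf_denom e (Suc j)" using cf_denom_bounds[of j] by (auto simp: q_def)
  have "cf_pq e (Suc j) * cf_gap e (Suc j) < cf_gap e j"
    using cf_gap_pos[of "Suc (Suc j)"] by simp
  then have "real q * (cf_pq e (Suc j) * cf_gap e (Suc j)) < real q * cf_gap e j"
    using q(1) by simp
  moreover have "real q * cf_gap e j \<le> 1"
    using cf_denom_gap_det[of j] cf_denom_bounds[of j] cf_gap_pos[of "Suc j"] q(2)
    by (smt (verit) mult_nonneg_nonneg of_int_nonneg)
  ultimately have "cf_pq e n * real q * cf_gap e (Suc j) < 1"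
    using n by (simp add: algebra_simps)
  moreover have "real q * e = cf_numer e (Suc j) + \<sigma> * cf_gap e (Suc j)"
    using cf_denom_mult_sub_numer[of "Suc j"] q(2) by (simp add: \<sigma>_def algebra_simps)
  moreover have "\<sigma> = 1 \<or> \<sigma> = -1"
    unfolding \<sigma>_def by (metis neg_one_even_power neg_one_odd_power)
  ultimately show thesis using that q(1) cf_gap_pos[of "Suc j"] by blast
qed

end

lemma seq_ind_ge_of_periodic:
  fixes u :: "nat \<Rightarrow> 'a"
  assumes L: "1 \<le> L" and K: "1 \<le> K" and periodic: "\<forall>j<(K - 1) * L. u (i + j + L) = u (i + j)"
  shows "ereal (real K) \<le> seq_ind u"
proof -
  define v where "v = map (\<lambda>j. u (i + j)) [0..<K * L]"
  define w where "w = map (\<lambda>j. u (i + j)) [0..<L]"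
  have "j < K * L \<Longrightarrow> u (i + j) = u (i + j mod L)" for j
  proof (induction j rule: less_induct)
    case (less j)
    show ?case
    proof (cases "j < L")
      case False
      then obtain j' where j': "j = j' + L" by (intro that[of "j - L"]) simp
      have "j' < (K - 1) * L" using less.prems j' K by (simp add: algebra_simps diff_mult_distrib)
      then have "u (i + j) = u (i + j')" using periodic j' by (simp add: add.assoc)
      also have "\<dots> = u (i + j' mod L)" using less.IH[of j'] j' less.prems L by simp
      finally show ?thesis using j' by simp
    qed simp
  qed
  then have "is_power_of v w"
    unfolding is_power_of_def v_def w_def using K L by auto
  moreover have "is_factor v u" "is_factor w u" "w \<noteq> []"
    using L unfolding is_factor_def v_def w_def by auto
  ultimately have "ereal (real (length v) / real (length w)) \<le> seq_ind u"
    unfolding seq_ind_def word_ind_def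
    by (intro SUP_upper2[of w] Sup_upper) blast+
  moreover have "real (length v) / real (length w) = real K" using L by (simp add: v_def w_def)
  ultimately show ?thesis by simp
qed

lemma seq_ind_ge_1: "1 \<le> seq_ind u"
  using seq_ind_ge_of_periodic[of 1 1 u 0] by (simp add: one_ereal_def)

lemma seq_ind_iet3_word_ge_of_periodic:
  assumes L: "1 \<le> L" and K: "1 \<le> K"
    and periodic: "\<forall>j<(K - 1) * L. code3 eps l ((T3 eps l ^^ (j + L)) ((T3 eps l ^^ c) x0)) =
      code3 eps l ((T3 eps l ^^ j) ((T3 eps l ^^ c) x0))"
  shows "ereal (real K) \<le> seq_ind (iet3_word eps l x0)"
proof -
  have "(T3 eps l ^^ (c + j)) x0 = (T3 eps l ^^ j) ((T3 eps l ^^ c) x0)" for j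
    by (simp add: add.commute[of c j] funpow_add)
  then have "\<forall>j<(K - 1) * L. iet3_word eps l x0 (c + j + L) = iet3_word eps l x0 (c + j)"
    using periodic by (simp add: iet3_word_def add.assoc)
  then show ?thesis by (rule seq_ind_ge_of_periodic[OF L K])
qed

lemma frac_add_le_of_frac_neg_le:
  fixes t \<delta> :: real
  assumes "0 \<le> \<delta>" "frac (- t) \<le> \<delta>"
  shows "frac (t + \<delta>) \<le> \<delta>"
proof -
  consider "1 \<le> \<delta>" | "\<delta> < 1" "t \<in> \<int>" | "\<delta> < 1" "t \<notin> \<int>" by linarith
  then show ?thesis
  proof cases
    case 1
    then show ?thesis using frac_lt_1[of "t + \<delta>"] by linarith
  next
    case 2
    then show ?thesis using assms(1) by (simp add: frac_add_int_left frac_eq)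
  next
    case 3
    then have "1 - \<delta> \<le> frac t" using assms by (simp add: frac_neg)
    then show ?thesis using 3 frac_lt_1[of t] by (simp add: frac_add frac_eq)
  qed
qed

lemma frac_diff_le_mem_arcs:
  fixes y s \<delta> :: real
  assumes "0 \<le> y" "y < 1" "frac (y - s) \<le> \<delta>"
  shows "y \<in> {frac s..min 1 (frac s + \<delta>)} \<union> {0..max 0 (frac s + \<delta> - 1)}"
proof (cases "frac s \<le> y")
  case True
  then have "frac (y - s) = y - frac s"
    using assms frac_diff_pos[of s y] by (simp add: frac_eq)
  then show ?thesis using True assms by auto
next
  case False
  then have "frac (y - s) = y + 1 - frac s"
    using assms frac_diff_neg[of y s] by (simp add: frac_eq)
  then show ?thesis using False assms by auto
qed

lemma emeasure_arcs_le:
  fixes a \<delta> :: real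
  assumes "0 < \<delta>" "0 \<le> a" "a < 1"
  shows "emeasure lborel ({a..min 1 (a + \<delta>)} \<union> {0..max 0 (a + \<delta> - 1)}) \<le> ennreal \<delta>"
proof -
  have "emeasure lborel ({a..min 1 (a + \<delta>)} \<union> {0..max 0 (a + \<delta> - 1)})
     \<le> emeasure lborel {a..min 1 (a + \<delta>)} + emeasure lborel {0..max 0 (a + \<delta> - 1)}"
    by (rule emeasure_subadditive) auto
  also have "\<dots> = ennreal (min 1 (a + \<delta>) - a) + ennreal (max 0 (a + \<delta> - 1))"
    using assms by (simp add: emeasure_lborel_Icc_eq)
  also have "\<dots> = ennreal (min 1 (a + \<delta>) - a + max 0 (a + \<delta> - 1))"
    using assms by (intro ennreal_plus[symmetric]) auto
  also have "\<dots> \<le> ennreal \<delta>" using assms by (intro ennreal_leI) auto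
  finally show ?thesis .
qed

text \<open>A union of \<open>card S\<close> arcs of length \<open>\<delta>\<close> cannot cover the circle.\<close>
lemma exists_frac_diff_gt:
  fixes S :: "real set"
  assumes S: "finite S" and \<delta>: "0 < \<delta>" "real (card S) * \<delta> < 1"
  obtains y where "0 \<le> y" "y < 1" "\<forall>s\<in>S. \<delta> < frac (y - s)"
proof -
  define J where "J s = {frac s..min 1 (frac s + \<delta>)} \<union> {0..max 0 (frac s + \<delta> - 1)}" for s
  have "\<exists>y\<in>{0..<1}. \<forall>s\<in>S. \<delta> < frac (y - s)"
  proof (rule ccontr)
    assume "\<not> ?thesis"
    then have no_good_point: "\<forall>y\<in>{0..<1}. \<exists>s\<in>S. frac (y - s) \<le> \<delta>" by (auto simp: not_less)
    have "{0..<1} \<subseteq> (\<Union>s\<in>S. J s)"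
    proof
      fix y :: real assume y: "y \<in> {0..<1}"
      then obtain s where "s \<in> S" "frac (y - s) \<le> \<delta>" using bspec[OF no_good_point y] by blast
      then show "y \<in> (\<Union>s\<in>S. J s)" using y frac_diff_le_mem_arcs[of y s \<delta>] unfolding J_def by auto
    qed
    then have "emeasure lborel {0..<(1::real)} \<le> emeasure lborel (\<Union>s\<in>S. J s)"
      using S by (intro emeasure_mono sets.finite_UN) (auto simp: J_def)
    also have "\<dots> \<le> (\<Sum>s\<in>S. emeasure lborel (J s))"
      using S by (intro emeasure_subadditive_finite) (auto simp: J_def)
    also have "\<dots> \<le> (\<Sum>s\<in>S. ennreal \<delta>)"
      using emeasure_arcs_le[OF \<delta>(1) frac_ge_0 frac_lt_1] by (intro sum_mono) (auto simp: J_def)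
    also have "\<dots> = ennreal (real (card S) * \<delta>)"
      using \<delta> by (simp add: ennreal_mult ennreal_of_nat_eq_real_of_nat)
    finally show False using \<delta> by (simp add: ennreal_le_iff2)
  qed
  then show thesis using that by auto
qed

lemma exists_frac_sign_diff_gt:
  fixes S :: "real set" and \<sigma> :: int
  assumes S: "finite S" and \<sigma>: "\<sigma> = 1 \<or> \<sigma> = -1" and \<delta>: "0 < \<delta>" "real (card S) * \<delta> < 1"
  obtains y where "0 \<le> y" "y < 1" "\<forall>s\<in>S. \<delta> < frac (\<sigma> * (y - s))"
  using \<sigma>
proof
  assume "\<sigma> = 1"
  then show thesis using exists_frac_diff_gt[OF S \<delta>] that by auto
next
  assume "\<sigma> = -1"
  have "real (card ((\<lambda>s. s - \<delta>) ` S)) * \<delta> \<le> real (card S) * \<delta>"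
    using card_image_le[OF S, of "\<lambda>s. s - \<delta>"] \<delta>(1) by (intro mult_right_mono) auto
  then have "real (card ((\<lambda>s. s - \<delta>) ` S)) * \<delta> < 1" using \<delta>(2) by linarith
  then obtain y where y: "0 \<le> y" "y < 1" "\<forall>s\<in>(\<lambda>s. s - \<delta>) ` S. \<delta> < frac (y - s)"
    by (rule exists_frac_diff_gt[OF finite_imageI[OF S] \<delta>(1)])
  have "\<delta> < frac (- (y - s))" if "s \<in> S" for s
  proof (rule ccontr)
    assume "\<not> ?thesis"
    then have "frac (y - s + \<delta>) \<le> \<delta>" using frac_add_le_of_frac_neg_le \<delta>(1) by simp
    moreover have "\<delta> < frac (y - (s - \<delta>))" using y(3) that by blast
    ultimately show False by (simp add: algebra_simps)
  qed
  then show thesis using that y \<open>\<sigma> = -1\<close> by simp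
qed

lemma eventually_frac_gt:
  fixes x \<delta> :: real
  assumes "0 \<le> \<delta>" "\<delta> < frac x"
  shows "\<forall>\<^sub>F z in nhds x. \<delta> < frac z"
proof -
  have "x \<notin> \<int>" using assms by (metis frac_eq_0_iff not_le)
  then have "isCont frac x" by (rule continuous_frac)
  then have "\<forall>\<^sub>F z in at x. \<delta> < frac z"
    using assms(2) by (simp add: isCont_def order_tendstoD(1))
  then show ?thesis using assms(2) by (simp add: eventually_nhds_conv_at)
qed

lemma frac_frac_diff: "frac (frac x - y) = frac (x - y)"
  by (metis diff_conv_add_uminus frac_add_simps(1))

lemma frac_lt_iff_frac_sub_lt:
  fixes t c \<delta> :: real
  assumes "0 \<le> c" "0 \<le> \<delta>" "\<delta> < frac (t - c)"
  shows "frac t < c \<longleftrightarrow> frac t - \<delta> < c"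
proof (cases "frac t < c")
  case False
  then have "frac (t - c) = frac t - c"
    using assms frac_frac_diff[of t c] frac_lt_1[of t] by (simp add: frac_eq)
  then show ?thesis using False assms by linarith
qed (use assms in linarith)

lemma frac_lt_iff_frac_add_lt:
  fixes t c \<delta> :: real
  assumes "c < 1" "0 \<le> \<delta>" "\<delta> < frac (c - t)"
  shows "frac t < c \<longleftrightarrow> frac t + \<delta> < c"
proof (cases "frac t < c")
  case True
  then have "0 \<le> c - frac t" "c - frac t < 1" using assms(1) frac_ge_0[of t] by linarith+
  then have "frac (c - frac t) = c - frac t" by (simp add: frac_eq)
  then have "frac (c - t) = c - frac t" by (simp add: frac_diff_simp)
  then show ?thesis using \<open>frac t < c\<close> assms by linarith
qed (use assms in linarith)

context
  fixes eps l :: real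
  assumes eps_gt_0: "0 < eps" and eps_lt_1: "eps < 1"
    and l_gt: "max eps (1 - eps) < l" and l_lt_1: "l < 1"
begin

definition rot :: "real \<Rightarrow> real" where
  "rot x = frac (x - eps)"

text \<open>Since \<open>rot\<close> maps \<open>[l, 1)\<close> into \<open>[0, l)\<close>, a \<open>rot\<close>-orbit enters \<open>[0, l)\<close> after at most one step.\<close>
definition enter :: "real \<Rightarrow> real" where
  "enter x = (if x < l then x else rot x)"

definition visits :: "real \<Rightarrow> nat \<Rightarrow> nat" where
  "visits x M = (\<Sum>m<M. if (rot ^^ m) x < l then 1 else 0)"

definition cell :: "real \<Rightarrow> letter option" where
  "cell x = (if x < l then Some (code3 eps l x) else None)"

definition cut_points :: "nat \<Rightarrow> real set" where
  "cut_points W = (\<lambda>m. real m * eps) ` {..W} \<union> (\<lambda>m. l + real m * eps) ` {..W}"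

lemma rot_ge_0: "0 \<le> rot x" and rot_lt_1: "rot x < 1"
  by (auto simp: rot_def frac_lt_1)

lemma rot_of_ge:
  assumes "l \<le> x" "x < 1"
  shows "rot x = x - eps" "rot x < l"
proof -
  show "rot x = x - eps" using assms l_gt eps_lt_1 by (simp add: rot_def frac_eq)
  then show "rot x < l" using assms l_gt by auto
qed

lemma T3_eq_enter_rot:
  assumes "0 \<le> x" "x < l"
  shows "T3 eps l x = enter (rot x)"
proof -
  consider "x < l - 1 + eps" | "l - 1 + eps \<le> x" "x < eps" | "eps \<le> x" by linarith
  then show ?thesis
  proof cases
    case 1
    then have "rot x = x - eps + 1"
      unfolding rot_def using assms eps_lt_1 l_lt_1 frac_unique_iff[of "x - eps" "x - eps + 1"] by simp
    then show ?thesis using 1 by (simp add: T3_def enter_def)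
  next
    case 2
    then have "rot x = x - eps + 1"
      unfolding rot_def using assms eps_lt_1 l_lt_1 frac_unique_iff[of "x - eps" "x - eps + 1"] by simp
    moreover have "rot (x - eps + 1) = x + 1 - 2 * eps"
      unfolding rot_def using 2 l_gt assms by (simp add: frac_eq)
    ultimately show ?thesis using 2 l_gt by (simp add: T3_def enter_def)
  next
    case 3
    then have "rot x = x - eps" unfolding rot_def using assms l_lt_1 eps_gt_0 by (simp add: frac_eq)
    then show ?thesis using 3 assms l_gt l_lt_1 by (simp add: T3_def enter_def)
  qed
qed

lemma funpow_rot_eq:
  assumes "0 \<le> y" "y < 1"
  shows "(rot ^^ m) y = frac (y - real m * eps)"
proof (induction m)
  case (Suc m)
  then show ?case by (simp add: rot_def frac_frac_diff algebra_simps)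
qed (use assms in \<open>simp add: frac_eq\<close>)

lemma visits_Suc: "visits x (Suc k) = (if x < l then 1 else 0) + visits (rot x) k"
  unfolding visits_def sum.lessThan_Suc_shift by (simp add: funpow_Suc_right del: funpow.simps)

lemma visits_add: "visits x (M1 + M2) = visits x M1 + visits ((rot ^^ M1) x) M2"
proof (induction M1 arbitrary: x)
  case 0 then show ?case by (simp add: visits_def)
next
  case (Suc M1)
  show ?case using Suc[of "rot x"]
    by (simp add: visits_Suc funpow_Suc_right del: funpow.simps)
qed

lemma visits_pos:
  assumes "m < M" "(rot ^^ m) x < l"
  shows "1 \<le> visits x M"
proof -
  have "visits x M = visits x m + visits ((rot ^^ m) x) (Suc (M - m - 1))"
    using visits_add[of x m "Suc (M - m - 1)"] assms(1) by simp
  then show ?thesis using assms by (simp add: visits_Suc)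
qed

lemma visits_cong:
  assumes "\<forall>m<M. cell ((rot ^^ m) x) = cell ((rot ^^ m) x')"
  shows "visits x M = visits x' M"
  unfolding visits_def using assms by (intro sum.cong refl) (auto simp: cell_def split: if_splits)

lemma enter_funpow_rot:
  assumes "0 \<le> x" "x < 1"
  shows "enter ((rot ^^ k) x) = (T3 eps l ^^ visits x k) (enter x)"
  using assms
proof (induction k arbitrary: x)
  case 0 then show ?case by (simp add: visits_def)
next
  case (Suc k)
  have IH: "enter ((rot ^^ k) (rot x)) = (T3 eps l ^^ visits (rot x) k) (enter (rot x))"
    using Suc.IH rot_ge_0 rot_lt_1 by blast
  show ?case
  proof (cases "x < l")
    case True
    then have "(T3 eps l ^^ visits x (Suc k)) (enter x) = (T3 eps l ^^ visits (rot x) k) (T3 eps l x)"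
      by (simp add: visits_Suc enter_def funpow_Suc_right del: funpow.simps)
    also have "T3 eps l x = enter (rot x)" using T3_eq_enter_rot True Suc.prems by simp
    finally show ?thesis using IH by (simp add: funpow_Suc_right del: funpow.simps)
  next
    case False
    then have "enter (rot x) = rot x" "enter x = rot x"
      using rot_of_ge[of x] Suc.prems by (auto simp: enter_def)
    then show ?thesis using IH False by (simp add: visits_Suc funpow_Suc_right del: funpow.simps)
  qed
qed

lemma T3_code_eq_of_cells_eq:
  assumes "0 \<le> x" "x < 1" "0 \<le> x'" "x' < 1"
    and "\<forall>m<M. cell ((rot ^^ m) x) = cell ((rot ^^ m) x')" and "j < visits x M"
  shows "code3 eps l ((T3 eps l ^^ j) (enter x)) = code3 eps l ((T3 eps l ^^ j) (enter x'))"
  using assms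
proof (induction M arbitrary: x x' j)
  case 0 then show ?case by (simp add: visits_def)
next
  case (Suc M)
  have same_cell: "cell x = cell x'" using Suc.prems(5)[rule_format, of 0] by simp
  have "\<forall>m<M. cell ((rot ^^ m) (rot x)) = cell ((rot ^^ m) (rot x'))"
    using Suc.prems(5) by (auto simp: funpow_Suc_right simp del: funpow.simps)
  then have IH: "\<And>j. j < visits (rot x) M \<Longrightarrow>
     code3 eps l ((T3 eps l ^^ j) (enter (rot x))) = code3 eps l ((T3 eps l ^^ j) (enter (rot x')))"
    using Suc.IH rot_ge_0 rot_lt_1 by blast
  show ?case
  proof (cases "x < l")
    case True
    then have x': "x' < l" and "code3 eps l x = code3 eps l x'"
      using same_cell by (auto simp: cell_def split: if_splits)
    then show ?thesis
    proof (cases j)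
      case (Suc j')
      then have "j' < visits (rot x) M" using Suc.prems(6) True by (simp add: visits_Suc)
      then show ?thesis using IH[of j'] Suc T3_eq_enter_rot[of x] T3_eq_enter_rot[of x'] True x' Suc.prems
        by (simp add: enter_def funpow_Suc_right del: funpow.simps)
    qed (simp add: True enter_def)
  next
    case False
    then have "\<not> x' < l" using same_cell by (auto simp: cell_def split: if_splits)
    then have "enter (rot x) = rot x" "enter x = rot x" "enter (rot x') = rot x'" "enter x' = rot x'"
      using rot_of_ge[of x] rot_of_ge[of x'] Suc.prems False by (auto simp: enter_def)
    then show ?thesis using IH[of j] Suc.prems(6) False by (simp add: visits_Suc)
  qed
qed

lemma cell_eq_if_same_side:
  assumes "z < l - 1 + eps \<longleftrightarrow> z' < l - 1 + eps" "z < eps \<longleftrightarrow> z' < eps" "z < l \<longleftrightarrow> z' < l"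
  shows "cell z = cell z'"
  using assms by (simp add: cell_def code3_def)

text \<open>If \<open>q * eps = p + \<sigma> * \<delta>\<close>, then \<open>q\<close> steps of \<open>rot\<close> move \<open>frac t\<close> by \<open>-\<sigma> * \<delta>\<close>; this does not
  change the cell when no cut point lies within distance \<open>\<delta>\<close> of \<open>t\<close> on that side.\<close>
lemma cell_frac_diff_eq:
  fixes \<sigma> p :: int and \<delta> t :: real
  assumes \<sigma>: "\<sigma> = 1 \<or> \<sigma> = -1" and \<delta>: "0 < \<delta>" and approx: "real q * eps = p + \<sigma> * \<delta>"
    and far: "\<forall>c\<in>{0, eps, l, l - 1 + eps}. \<delta> < frac (\<sigma> * (t - c))"
  shows "cell (frac t) = cell (frac (t - real q * eps))"
proof -
  have cuts: "0 \<le> l - 1 + eps" "0 \<le> eps" "0 \<le> l" "l - 1 + eps < 1" "eps < 1" "l < 1"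
    using l_gt l_lt_1 eps_gt_0 eps_lt_1 by auto
  have "t - real q * eps = (t - \<sigma> * \<delta>) + of_int (- p)" using approx by simp
  then have shift: "frac (t - real q * eps) = frac (t - \<sigma> * \<delta>)" by (simp only: frac_add_of_int_right)
  show ?thesis using \<sigma>
  proof
    assume "\<sigma> = 1"
    then have "\<delta> < frac t" using far by simp
    then have moved: "frac (t - real q * eps) = frac t - \<delta>"
      using shift \<open>\<sigma> = 1\<close> frac_frac_diff[of t \<delta>] \<delta> frac_lt_1[of t] by (simp add: frac_eq)
    have "\<delta> < frac (t - eps)" "\<delta> < frac (t - l)" "\<delta> < frac (t - (l - 1 + eps))"
      using far \<open>\<sigma> = 1\<close> by simp_all
    then show ?thesis unfolding moved using cuts \<delta>
      by (intro cell_eq_if_same_side frac_lt_iff_frac_sub_lt) simp_all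
  next
    assume "\<sigma> = -1"
    then have "\<delta> < frac (- t)" using far by simp
    then have sum_lt_1: "frac t + \<delta> < 1" using \<delta> by (auto simp: frac_neg split: if_splits)
    then have "\<delta> < 1" using frac_ge_0[of t] by linarith
    then have "frac \<delta> = \<delta>" using \<delta> by (simp add: frac_eq)
    then have "frac (t + \<delta>) = frac t + \<delta>" using sum_lt_1 unfolding frac_add by simp
    then have moved: "frac (t - real q * eps) = frac t + \<delta>" using shift \<open>\<sigma> = -1\<close> by simp
    have "\<forall>c\<in>{0, eps, l, l - 1 + eps}. \<delta> < frac (c - t)"
      using far \<open>\<sigma> = -1\<close> by (simp add: algebra_simps)
    then show ?thesis unfolding moved using cuts \<delta>
      by (intro cell_eq_if_same_side frac_lt_iff_frac_add_lt) simp_all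
  qed
qed

lemma finite_cut_points: "finite (cut_points W)"
  by (simp add: cut_points_def)

lemma card_cut_points_le: "card (cut_points W) \<le> 2 * (W + 1)"
proof -
  have "card (cut_points W) \<le> card ((\<lambda>m. real m * eps) ` {..W}) + card ((\<lambda>m. l + real m * eps) ` {..W})"
    unfolding cut_points_def by (rule card_Un_le)
  also have "\<dots> \<le> card {..W} + card {..W}" by (intro add_mono card_image_le) auto
  finally show ?thesis by simp
qed

lemma cell_funpow_rot_periodic:
  fixes \<sigma> p :: int and \<delta> :: real
  assumes \<sigma>: "\<sigma> = 1 \<or> \<sigma> = -1" and \<delta>: "0 < \<delta>" and approx: "real q * eps = p + \<sigma> * \<delta>"
    and y: "0 \<le> y" "y < 1" and far: "\<forall>s\<in>cut_points W. \<delta> < frac (\<sigma> * (y - s))" and "m < W"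
  shows "cell ((rot ^^ m) y) = cell ((rot ^^ (m + q)) y)"
proof -
  define t where "t = y - real m * eps"
  have "m \<in> {..W}" "Suc m \<in> {..W}" using \<open>m < W\<close> by auto
  then have "real m * eps \<in> cut_points W" "real (Suc m) * eps \<in> cut_points W"
    "l + real m * eps \<in> cut_points W" "l + real (Suc m) * eps \<in> cut_points W"
    unfolding cut_points_def by (blast intro: imageI)+
  then have "\<delta> < frac (\<sigma> * (t - 0))" "\<delta> < frac (\<sigma> * (t - eps))" "\<delta> < frac (\<sigma> * (t - l))"
    and far_Suc: "\<delta> < frac (\<sigma> * (y - (l + real (Suc m) * eps)))"
    using far by (auto simp: t_def algebra_simps)
  moreover have "\<sigma> * (t - (l - 1 + eps)) = \<sigma> * (y - (l + real (Suc m) * eps)) + of_int \<sigma>"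
    by (simp add: t_def algebra_simps)
  then have "\<delta> < frac (\<sigma> * (t - (l - 1 + eps)))" using far_Suc by simp
  ultimately have "\<forall>c\<in>{0, eps, l, l - 1 + eps}. \<delta> < frac (\<sigma> * (t - c))" by simp
  then have "cell (frac t) = cell (frac (t - real q * eps))"
    by (rule cell_frac_diff_eq[OF \<sigma> \<delta> approx])
  then show ?thesis using funpow_rot_eq[OF y] by (simp add: t_def algebra_simps)
qed

lemma T3_code_periodic_of_cell_periodic:
  assumes y: "0 \<le> y" "y < 1" and q: "1 \<le> q" and K: "2 \<le> K"
    and periodic: "\<forall>m<(K - 1) * q. cell ((rot ^^ m) y) = cell ((rot ^^ (m + q)) y)"
  obtains L where "1 \<le> L"
    "\<forall>j<(K - 1) * L. code3 eps l ((T3 eps l ^^ (j + L)) (enter y)) = code3 eps l ((T3 eps l ^^ j) (enter y))"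
proof -
  define y' where "y' = (rot ^^ q) y"
  define L where "L = visits y q"
  have y': "0 \<le> y'" "y' < 1" unfolding y'_def using q rot_ge_0 rot_lt_1 by (cases q; simp)+
  have same_cells: "\<forall>m<(K - 1) * q. cell ((rot ^^ m) y) = cell ((rot ^^ m) y')"
    using periodic by (simp add: y'_def funpow_add)
  have visits_mult: "visits y (b * q) = b * L" if "b \<le> K - 1" for b
    using that
  proof (induction b)
    case (Suc b)
    have "b * q < (K - 1) * q" using Suc.prems q by simp
    then have "visits y (b * q) = visits y' (b * q)"
      using same_cells less_trans by (intro visits_cong) blast
    moreover have "visits y (q + b * q) = L + visits y' (b * q)"
      unfolding L_def y'_def by (rule visits_add)
    ultimately show ?case using Suc by (simp add: add.commute)
  qed (simp add: visits_def)
  have "1 \<le> L"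
  proof (cases "y < l")
    case True then show ?thesis unfolding L_def using visits_pos[of 0 q y] q by simp
  next
    case y_ge_l: False
    then have rot_y: "rot y < l" using rot_of_ge[of y] y by simp
    show ?thesis
    proof (cases "q = 1")
      case True
      then have "cell y = cell (rot y)" using same_cells K by (auto simp: y'_def elim!: allE[of _ 0])
      then show ?thesis using y_ge_l rot_y by (simp add: cell_def split: if_splits)
    next
      case False
      then show ?thesis unfolding L_def using visits_pos[of 1 q y] q rot_y by simp
    qed
  qed
  moreover have "code3 eps l ((T3 eps l ^^ (j + L)) (enter y)) = code3 eps l ((T3 eps l ^^ j) (enter y))"
    if "j < (K - 1) * L" for j
  proof -
    have "(T3 eps l ^^ (j + L)) (enter y) = (T3 eps l ^^ j) (enter y')"
      using enter_funpow_rot[OF y, of q] by (simp add: y'_def L_def funpow_add)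
    moreover have "j < visits y ((K - 1) * q)" using that visits_mult[of "K - 1"] by simp
    ultimately show ?thesis using T3_code_eq_of_cells_eq[OF y y' same_cells] by simp
  qed
  ultimately show thesis using that by blast
qed

lemma exists_orbit_point_far_from_cuts:
  fixes \<sigma> :: int and \<delta> :: real
  assumes "eps \<notin> \<rat>" and x0: "0 \<le> x0" "x0 < 1" and \<sigma>: "\<sigma> = 1 \<or> \<sigma> = -1" and \<delta>: "0 < \<delta>"
    and small: "real (card (cut_points W)) * \<delta> < 1"
  obtains k where "\<forall>s\<in>cut_points W. \<delta> < frac (\<sigma> * ((rot ^^ k) x0 - s))"
proof -
  obtain y0 where y0: "\<forall>s\<in>cut_points W. \<delta> < frac (\<sigma> * (y0 - s))"
    using exists_frac_sign_diff_gt[OF finite_cut_points \<sigma> \<delta> small] by blast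
  have "\<forall>s\<in>cut_points W. \<forall>\<^sub>F z in nhds y0. \<delta> < frac (\<sigma> * (z - s))"
  proof
    fix s assume "s \<in> cut_points W"
    then have "\<forall>\<^sub>F z in nhds (\<sigma> * (y0 - s)). \<delta> < frac z"
      using eventually_frac_gt \<delta> y0 by simp
    moreover have "((\<lambda>z. \<sigma> * (z - s)) \<longlongrightarrow> \<sigma> * (y0 - s)) (nhds y0)"
      by (intro tendsto_intros filterlim_ident)
    ultimately show "\<forall>\<^sub>F z in nhds y0. \<delta> < frac (\<sigma> * (z - s))"
      by (rule eventually_compose_filterlim)
  qed
  then have "\<forall>\<^sub>F z in nhds y0. \<forall>s\<in>cut_points W. \<delta> < frac (\<sigma> * (z - s))"
    by (simp add: eventually_ball_finite finite_cut_points)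
  then obtain r where r: "0 < r" "\<And>z. dist z y0 < r \<Longrightarrow> \<forall>s\<in>cut_points W. \<delta> < frac (\<sigma> * (z - s))"
    unfolding eventually_nhds_metric by blast
  have "- eps \<notin> \<rat>" using assms(1) by simp
  then obtain h k where "k > 0" and hk: "\<bar>of_int k * (- eps) - of_int h - (y0 - x0)\<bar> < r"
    using sequence_of_fractional_parts_is_dense[OF _ r(1)] by blast
  define z where "z = x0 - of_int k * eps - of_int h"
  have "dist z y0 < r" using hk by (simp add: z_def dist_real_def algebra_simps)
  then have far: "\<forall>s\<in>cut_points W. \<delta> < frac (\<sigma> * (z - s))" by (rule r(2))
  define n where "n = h - \<lfloor>x0 - of_int k * eps\<rfloor>"
  have "(rot ^^ nat k) x0 = frac (x0 - of_int k * eps)"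
    using funpow_rot_eq[OF x0] \<open>k > 0\<close> by simp
  also have "\<dots> = z + of_int n"
    by (simp add: z_def n_def frac_def)
  finally have shift: "\<sigma> * ((rot ^^ nat k) x0 - s) = \<sigma> * (z - s) + of_int (\<sigma> * n)" for s
    by (simp add: algebra_simps)
  have "frac (\<sigma> * ((rot ^^ nat k) x0 - s)) = frac (\<sigma> * (z - s))" for s
    unfolding shift by (rule frac_add_of_int_right)
  then show thesis using that[of "nat k"] far by simp
qed

lemma seq_ind_ge_of_approximation:
  fixes \<sigma> p :: int and \<delta> :: real
  assumes "eps \<notin> \<rat>" and x0: "0 \<le> x0" "x0 < l"
    and q: "1 \<le> q" and \<sigma>: "\<sigma> = 1 \<or> \<sigma> = -1" and \<delta>: "0 < \<delta>" and approx: "real q * eps = p + \<sigma> * \<delta>"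
    and K: "2 \<le> K" and small: "2 * real K * real q * \<delta> < 1"
  shows "ereal (real K) \<le> seq_ind (iet3_word eps l x0)"
proof -
  define W where "W = (K - 1) * q"
  have "real (card (cut_points W)) \<le> 2 * real K * real q"
  proof -
    have "card (cut_points W) \<le> 2 * (W + 1)" by (rule card_cut_points_le)
    also have "\<dots> \<le> 2 * (K * q)"
    proof -
      have "(K - 1) * q + q = K * q" using K by (cases K) auto
      then show ?thesis using q by (simp add: W_def)
    qed
    finally have "real (card (cut_points W)) \<le> real (2 * (K * q))" by (simp only: of_nat_le_iff)
    then show ?thesis by simp
  qed
  then have "real (card (cut_points W)) * \<delta> < 1"
    using small \<delta> by (smt (verit) mult_right_mono)
  moreover have x0': "0 \<le> x0" "x0 < 1" using x0 l_lt_1 by auto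
  ultimately obtain k where far: "\<forall>s\<in>cut_points W. \<delta> < frac (\<sigma> * ((rot ^^ k) x0 - s))"
    using exists_orbit_point_far_from_cuts[OF assms(1) _ _ \<sigma> \<delta>] by blast
  define y where "y = (rot ^^ k) x0"
  have y: "0 \<le> y" "y < 1" unfolding y_def using x0' rot_ge_0 rot_lt_1 by (cases k; simp)+
  have "\<forall>m<W. cell ((rot ^^ m) y) = cell ((rot ^^ (m + q)) y)"
    using cell_funpow_rot_periodic[OF \<sigma> \<delta> approx y] far by (simp add: y_def)
  then obtain L where L: "1 \<le> L"
    "\<forall>j<(K - 1) * L. code3 eps l ((T3 eps l ^^ (j + L)) (enter y)) = code3 eps l ((T3 eps l ^^ j) (enter y))"
    using T3_code_periodic_of_cell_periodic[OF y q K] by (auto simp: W_def)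
  have "enter y = (T3 eps l ^^ visits x0 k) x0"
    using enter_funpow_rot[OF x0', of k] x0 by (simp add: y_def enter_def)
  then show ?thesis using L K by (intro seq_ind_iet3_word_ge_of_periodic[of L K]) simp_all
qed

end

theorem proposition2:
  fixes eps l x0 :: real
  assumes "0 < eps" "eps < 1" "eps \<notin> \<rat>"
    and "max eps (1 - eps) < l" "l < 1"
    and "0 \<le> x0" "x0 < l"
    and "\<exists>M. \<forall>n. cf_pq eps n \<le> M"
  shows "(SUP n. ereal (real_of_int (cf_pq eps n div 2))) \<le> seq_ind (iet3_word eps l x0)"
proof (rule SUP_least)
  fix n
  consider "cf_pq eps n div 2 \<le> 1" | "2 \<le> cf_pq eps n div 2" by linarith
  then show "ereal (real_of_int (cf_pq eps n div 2)) \<le> seq_ind (iet3_word eps l x0)"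
  proof cases
    case 1
    then have "ereal (real_of_int (cf_pq eps n div 2)) \<le> 1" by (simp add: one_ereal_def)
    then show ?thesis using seq_ind_ge_1 by (rule order_trans)
  next
    case 2
    define K where "K = nat (cf_pq eps n div 2)"
    have "cf_pq eps 0 = 0" using assms(1,2) by (simp add: cf_pq_def floor_eq_iff)
    then have "1 \<le> n" using 2 by (cases n) auto
    then obtain q :: nat and p \<sigma> :: int and \<delta> :: real where approx: "1 \<le> q" "\<sigma> = 1 \<or> \<sigma> = -1" "0 < \<delta>"
      "real q * eps = p + \<sigma> * \<delta>" "cf_pq eps n * real q * \<delta> < 1"
      by (rule cf_approximation[OF assms(1-3)])
    have K: "2 \<le> K" "real K = cf_pq eps n div 2" using 2 by (simp_all add: K_def)
    then have "2 * real K * real q * \<delta> \<le> cf_pq eps n * real q * \<delta>"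
      using approx(1,3) by (intro mult_right_mono) auto
    then have "2 * real K * real q * \<delta> < 1" using approx(5) by linarith
    then have "ereal (real K) \<le> seq_ind (iet3_word eps l x0)"
      by (rule seq_ind_ge_of_approximation[OF assms(1,2,4,5,3,6,7) approx(1-4) K(1)])
    then show ?thesis using K(2) by simp
  qed
qed

end
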